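(* Let $c \geq 1$ and let $\Gamma \subset \mathbb{P}^c$ be a finite set of $d \geq 2c+1$ points in linear semi-uniform position. Then there exists a subset $\Gamma' \subset \Gamma$ of $2c+1$ points which spans $\mathbb{P}^c$ and is $3$-regular.
   Context: The ground field is algebraically closed of arbitrary characteristic. A finite set $\Gamma \subset \mathbb{P}^c$ is in linear semi-uniform position if it spans $\mathbb{P}^c$ and there are integers $\nu(i,\Gamma)$, $0 \leq i \leq c$, such that every $i$-dimensional linear subspace of $\mathbb{P}^c$ spanned by $i+1$ linearly independent points of $\Gamma$ contains exactly $\nu(i,\Gamma)$ points of $\Gamma$. A finite set $\Gamma'$ is $3$-regular if it is $3$-regular in the sense of Castelnuovo–Mumford, i.e. $H^1(\mathbb{P}^c, \mathcal{I}_{\Gamma'}(2)) = 0$; equivalently, $\Gamma'$ imposes independent conditions on quadrics, i.e. for each $p \in \Gamma'$ there is a quadric hypersurface containing $\Gamma' \setminus \{p\}$ but not $p$. *)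

theory Defs
  imports "HOL-Computational_Algebra.Polynomial"
begin

text \<open>Homogeneous coordinates are vectors
 v :: nat \<Rightarrow> 'k supported on {0..c} (i.e. k^(c+1)).
 A point of P^c is a 1-dimensional linear subspace (a line through the origin).\<close>

definition vecs :: "nat \<Rightarrow> (nat \<Rightarrow> 'k::field) set" where
  "vecs c = {v. \<forall>i>c. v i = 0}"

definition proj_pt :: "(nat \<Rightarrow> 'k::field) \<Rightarrow> (nat \<Rightarrow> 'k) set" where
  "proj_pt v = {(\<lambda>i. a * v i) | a. True}"

definition proj_space :: "nat \<Rightarrow> (nat \<Rightarrow> 'k::field) set set" where
  "proj_space c = {proj_pt v | v. v \<in> vecs c \<and> v \<noteq> (\<lambda>_. 0)}"

definition lspan :: "(nat \<Rightarrow> 'k::field) set set \<Rightarrow> (nat \<Rightarrow> 'k) set" where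
  "lspan S = {(\<lambda>i. \<Sum>p\<in>S. f p i) | f. \<forall>p\<in>S. f p \<in> p}"

definition lin_indep_pts :: "(nat \<Rightarrow> 'k::field) set set \<Rightarrow> bool" where
  "lin_indep_pts S \<longleftrightarrow> finite S \<and>
     (\<forall>f. (\<forall>p\<in>S. f p \<in> p) \<and> (\<lambda>i. \<Sum>p\<in>S. f p i) = (\<lambda>_. 0) \<longrightarrow> (\<forall>p\<in>S. f p = (\<lambda>_. 0)))"

definition spans_proj :: "nat \<Rightarrow> (nat \<Rightarrow> 'k::field) set set \<Rightarrow> bool" where
  "spans_proj c S \<longleftrightarrow> lspan S = vecs c"

definition linear_semi_uniform :: "nat \<Rightarrow> (nat \<Rightarrow> 'k::field) set set \<Rightarrow> bool" where
  "linear_semi_uniform c \<Gamma> \<longleftrightarrow> spans_proj c \<Gamma> \<and>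
     (\<exists>\<nu>::nat \<Rightarrow> nat. \<forall>i\<le>c. \<forall>T\<subseteq>\<Gamma>. card T = i + 1 \<and> lin_indep_pts T \<longrightarrow>
        card {p\<in>\<Gamma>. p \<subseteq> lspan T} = \<nu> i)"

definition quad_form :: "nat \<Rightarrow> (nat \<Rightarrow> nat \<Rightarrow> 'k::field) \<Rightarrow> (nat \<Rightarrow> 'k) \<Rightarrow> 'k" where
  "quad_form c a v = (\<Sum>j\<le>c. \<Sum>k\<le>c. a j k * v j * v k)"

definition quadric_contains :: "nat \<Rightarrow> (nat \<Rightarrow> nat \<Rightarrow> 'k::field) \<Rightarrow> (nat \<Rightarrow> 'k) set \<Rightarrow> bool" where
  "quadric_contains c a p \<longleftrightarrow> (\<forall>v\<in>p. quad_form c a v = 0)"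

text \<open>3-regularity (Castelnuovo-Mumford), i.e. H^1(I(2)) = 0, in the equivalent form:
 imposing independent conditions on quadrics.\<close>
definition three_regular :: "nat \<Rightarrow> (nat \<Rightarrow> 'k::field) set set \<Rightarrow> bool" where
  "three_regular c \<Gamma>' \<longleftrightarrow> (\<forall>p\<in>\<Gamma>'. \<exists>a. (\<forall>q\<in>\<Gamma>' - {p}. quadric_contains c a q) \<and> \<not> quadric_contains c a p)"

end

theory Submission
  imports Defs "HOL-Library.Function_Algebras"
begin

text \<open>Represent the points by vectors, choose a basis e_0, ..., e_c among them and let
  W_k be the span of e_0, ..., e_(k-1). Let d_k be the number of points in W_(k+1) - W_k, so
  that \<nu>(k) = d_0 + ... + d_k. Semi-uniformity, applied to the basis with e_k replaced by
  e_(k+1), gives d_k \<le> d_(k+1); also d_0 = 1. If m is the first index with d_m \<ge> 2, then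
  \<nu>(j) = j + 1 for j < m, so any m + 1 of the points are linearly independent. In each layer
  pick min(d_k, m + 1) points, among them e_k; since d_k \<ge> 2 from m on, and some d_k exceeds
  m + 1 unless all layers are taken whole, this gives at least 2c + 1 points. They impose
  independent conditions on quadrics, layer by layer: a point of layer k is cut out by h_k * l,
  where the linear form h_k vanishes on W_k but nowhere else on W_(k+1), and l vanishes on the
  other chosen points of the (independent) layer; a quadric cutting out a point of a lower layer
  is corrected on layer k by adding a multiple h_k * l'. Finally keep the basis and c further
  chosen points. The argument works over any field.\<close>

definition scale_fun :: "'k::field \<Rightarrow> (nat \<Rightarrow> 'k) \<Rightarrow> nat \<Rightarrow> 'k" where
  "scale_fun a v = (\<lambda>i. a * v i)"

lemma scale_fun_apply [simp]: "scale_fun a v i = a * v i"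
  by (simp add: scale_fun_def)

interpretation V: vector_space "scale_fun :: 'k::field \<Rightarrow> _"
  by unfold_locales (auto simp: fun_eq_iff algebra_simps)

interpretation K: vector_space "(*) :: 'k::field \<Rightarrow> 'k \<Rightarrow> 'k"
  by unfold_locales (auto simp: algebra_simps)

interpretation VK: vector_space_pair "scale_fun :: 'k::field \<Rightarrow> _" "(*) :: 'k \<Rightarrow> 'k \<Rightarrow> 'k"
  by unfold_locales

lemma sum_fun_apply: "(\<Sum>p\<in>S. f p) i = (\<Sum>p\<in>S. f p i)"
  by (induct S rule: infinite_finite_induct) auto

definition unit_fun :: "nat \<Rightarrow> nat \<Rightarrow> 'k::field" where
  "unit_fun j = (\<lambda>i. if i = j then 1 else 0)"

lemma vecs_eq_sum_unit_funs:
  assumes "v \<in> vecs c"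
  shows "v = (\<Sum>j\<le>c. scale_fun (v j) (unit_fun j))"
proof
  fix i
  show "v i = (\<Sum>j\<le>c. scale_fun (v j) (unit_fun j)) i"
  proof (cases "i \<le> c")
    case True
    have "(\<Sum>j\<le>c. v j * (if i = j then 1 else 0)) = (\<Sum>j\<le>c. if i = j then v j else 0)"
      by (rule sum.cong) auto
    then show ?thesis using True by (simp add: sum_fun_apply unit_fun_def)
  next
    case False
    then show ?thesis using assms by (simp add: sum_fun_apply unit_fun_def vecs_def)
  qed
qed

lemma subspace_vecs: "V.subspace (vecs c)"
  unfolding V.subspace_def vecs_def by auto

lemma unit_fun_in_vecs: "j \<le> c \<Longrightarrow> unit_fun j \<in> vecs c"
  by (auto simp: unit_fun_def vecs_def)

lemma vecs_subset_span_unit_funs: "vecs c \<subseteq> V.span (unit_fun ` {..c})"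
proof
  fix v assume "v \<in> vecs c"
  then have "v = (\<Sum>j\<le>c. scale_fun (v j) (unit_fun j))" by (rule vecs_eq_sum_unit_funs)
  also have "\<dots> \<in> V.span (unit_fun ` {..c})"
    by (intro V.span_sum V.span_scale V.span_base) auto
  finally show "v \<in> V.span (unit_fun ` {..c})" .
qed

lemma inj_unit_fun: "inj (unit_fun :: nat \<Rightarrow> nat \<Rightarrow> 'k::field)"
proof (rule injI)
  fix j k assume "unit_fun j = (unit_fun k :: nat \<Rightarrow> 'k)"
  then have "unit_fun j j = (unit_fun k j :: 'k)" by simp
  then show "j = k" by (simp add: unit_fun_def split: if_splits)
qed

lemma card_unit_funs: "card (unit_fun ` {..c} :: (nat \<Rightarrow> 'k::field) set) = Suc c"
  using card_image[OF inj_on_subset[OF inj_unit_fun subset_UNIV], of "{..c}"] by simp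

lemma independent_unit_funs: "V.independent (unit_fun ` {..c} :: (nat \<Rightarrow> 'k::field) set)"
proof
  assume "V.dependent (unit_fun ` {..c} :: (nat \<Rightarrow> 'k) set)"
  then obtain u where u: "\<exists>v\<in>unit_fun ` {..c}. u v \<noteq> (0::'k)"
      "(\<Sum>v\<in>unit_fun ` {..c}. scale_fun (u v) v) = 0"
    using V.dependent_finite[of "unit_fun ` {..c} :: (nat \<Rightarrow> 'k) set"] by blast
  then obtain j where j: "j \<le> c" "u (unit_fun j) \<noteq> 0" by auto
  have "(\<Sum>v\<in>unit_fun ` {..c}. scale_fun (u v) v) = (\<Sum>i\<le>c. scale_fun (u (unit_fun i)) (unit_fun i))"
    by (simp add: sum.reindex inj_on_subset[OF inj_unit_fun])
  then have "0 = (\<Sum>i\<le>c. scale_fun (u (unit_fun i)) (unit_fun i)) j"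
    using u(2) by simp
  also have "\<dots> = (\<Sum>i\<le>c. if j = i then u (unit_fun i) else 0)"
    unfolding sum_fun_apply by (rule sum.cong) (auto simp: unit_fun_def)
  also have "\<dots> = u (unit_fun j)" using j by simp
  finally show False using j by simp
qed

lemma independent_in_vecs_card_le:
  assumes "V.independent X" "X \<subseteq> vecs c"
  shows "finite X" "card X \<le> Suc c"
  using V.independent_span_bound[of "unit_fun ` {..c}" X] assms vecs_subset_span_unit_funs[of c]
  by (auto simp: card_unit_funs)

lemma card_ge_if_spans_vecs:
  assumes "finite X" "vecs c \<subseteq> V.span X"
  shows "Suc c \<le> card X"
  using V.independent_span_bound[OF assms(1) independent_unit_funs[of c]]
    assms(2) unit_fun_in_vecs[of _ c]
  by (auto simp: card_unit_funs)

lemma linear_apply_vecs: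
  assumes "Vector_Spaces.linear scale_fun (*) g" "v \<in> vecs c"
  shows "g v = (\<Sum>j\<le>c. v j * g (unit_fun j))"
proof -
  have "g v = g (\<Sum>j\<le>c. scale_fun (v j) (unit_fun j))" using vecs_eq_sum_unit_funs[OF assms(2)] by simp
  also have "\<dots> = (\<Sum>j\<le>c. v j * g (unit_fun j))"
    using assms(1) by (simp add: VK.linear_sum VK.linear_scale)
  finally show ?thesis .
qed

definition quadratic_on :: "nat \<Rightarrow> ((nat \<Rightarrow> 'k::field) \<Rightarrow> 'k) \<Rightarrow> bool" where
  "quadratic_on c Q \<longleftrightarrow> (\<exists>a. \<forall>v\<in>vecs c. Q v = quad_form c a v)"

lemma quadratic_on_add:
  assumes "quadratic_on c Q1" "quadratic_on c Q2"
  shows "quadratic_on c (\<lambda>v. Q1 v + Q2 v)"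
proof -
  obtain a1 a2 where a: "\<forall>v\<in>vecs c. Q1 v = quad_form c a1 v" "\<forall>v\<in>vecs c. Q2 v = quad_form c a2 v"
    using assms unfolding quadratic_on_def by blast
  show ?thesis unfolding quadratic_on_def
    by (rule exI[of _ "\<lambda>j k. a1 j k + a2 j k"]) (auto simp: a quad_form_def distrib_right sum.distrib)
qed

lemma quadratic_on_mult_linear:
  fixes g1 g2 :: "(nat \<Rightarrow> 'k::field) \<Rightarrow> 'k"
  assumes "Vector_Spaces.linear scale_fun (*) g1" "Vector_Spaces.linear scale_fun (*) g2"
  shows "quadratic_on c (\<lambda>v. g1 v * g2 v)"
  unfolding quadratic_on_def
proof (intro exI[of _ "\<lambda>j k. g1 (unit_fun j) * g2 (unit_fun k)"] ballI)
  fix v :: "nat \<Rightarrow> 'k" assume v: "v \<in> vecs c"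
  have "g1 v * g2 v = (\<Sum>j\<le>c. v j * g1 (unit_fun j)) * (\<Sum>k\<le>c. v k * g2 (unit_fun k))"
    using linear_apply_vecs[OF assms(1) v] linear_apply_vecs[OF assms(2) v] by simp
  also have "\<dots> = quad_form c (\<lambda>j k. g1 (unit_fun j) * g2 (unit_fun k)) v"
    unfolding quad_form_def sum_product by (intro sum.cong refl) (simp only: ac_simps)
  finally show "g1 v * g2 v = quad_form c (\<lambda>j k. g1 (unit_fun j) * g2 (unit_fun k)) v" .
qed

definition quadric_separated :: "nat \<Rightarrow> (nat \<Rightarrow> 'k::field) set \<Rightarrow> bool" where
  "quadric_separated c S \<longleftrightarrow>
     (\<forall>p\<in>S. \<exists>Q. quadratic_on c Q \<and> (\<forall>q\<in>S - {p}. Q q = 0) \<and> Q p \<noteq> 0)"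

lemma quadric_separated_subset:
  "quadric_separated c S \<Longrightarrow> T \<subseteq> S \<Longrightarrow> quadric_separated c T"
  unfolding quadric_separated_def by (metis Diff_iff subsetD)

definition flag :: "(nat \<Rightarrow> nat \<Rightarrow> 'k::field) \<Rightarrow> nat \<Rightarrow> (nat \<Rightarrow> 'k) set" where
  "flag e k = V.span (e ` {..<k})"

lemma flag_mono: "k \<le> l \<Longrightarrow> flag e k \<subseteq> flag e l"
  unfolding flag_def by (intro V.span_mono) auto

lemma flag_0 [simp]: "flag e 0 = {0}"
  by (simp add: flag_def)

lemma flag_Suc: "flag e (Suc k) = V.span (insert (e k) (e ` {..<k}))"
  by (simp add: flag_def lessThan_Suc)

lemma flag_SucE:
  assumes "x \<in> flag e (Suc k)"
  obtains t where "x - scale_fun t (e k) \<in> flag e k"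
proof -
  from assms have "x \<in> V.span (insert (e k) (e ` {..<k}))" by (simp add: flag_Suc)
  then show ?thesis using that unfolding V.span_breakdown_eq flag_def by blast
qed

lemma basis_in_flag_Suc: "e k \<in> flag e (Suc k)"
  unfolding flag_def by (intro V.span_base) auto

locale flag_basis =
  fixes c :: nat and e :: "nat \<Rightarrow> nat \<Rightarrow> 'k::field"
  assumes basis_independent: "V.independent (e ` {..c})"
    and basis_inj: "inj_on e {..c}"
begin

lemma basis_notin_flag:
  assumes "k \<le> c"
  shows "e k \<notin> flag e k"
proof
  assume "e k \<in> flag e k"
  moreover have "flag e k \<subseteq> V.span (e ` {..c} - {e k})"
    unfolding flag_def using basis_inj assms by (intro V.span_mono) (auto simp: inj_on_def)
  ultimately have "V.dependent (e ` {..c})"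
    unfolding V.dependent_def using assms by blast
  then show False using basis_independent by simp
qed

lemma obtain_linear_vanishing_on_flag:
  assumes "k \<le> c"
  obtains h where "Vector_Spaces.linear scale_fun (*) h"
    "\<And>x. x \<in> flag e k \<Longrightarrow> h x = 0"
    "\<And>x. x \<in> flag e (Suc k) \<Longrightarrow> x \<notin> flag e k \<Longrightarrow> h x \<noteq> 0"
proof -
  obtain h where h: "Vector_Spaces.linear scale_fun (*) h"
    "\<forall>x\<in>e ` {..c}. h x = (if x = e k then 1 else 0)"
    using VK.linear_independent_extend[OF basis_independent, of "\<lambda>x. if x = e k then 1 else 0"]
    by blast
  have h_flag: "h x = 0" if "x \<in> flag e k" for x
  proof -
    have "\<forall>y\<in>e ` {..<k}. h y = 0"
      using h(2) basis_inj assms by (auto simp: inj_on_def)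
    then show ?thesis using VK.linear_eq_0_on_span[OF h(1)] that unfolding flag_def by blast
  qed
  have "h x \<noteq> 0" if x: "x \<in> flag e (Suc k)" "x \<notin> flag e k" for x
  proof
    assume hx: "h x = 0"
    obtain t where t: "x - scale_fun t (e k) \<in> flag e k"
      using x(1) by (rule flag_SucE)
    have "h x = h (x - scale_fun t (e k)) + h (scale_fun t (e k))"
      using VK.linear_add[OF h(1), of "x - scale_fun t (e k)" "scale_fun t (e k)"] by simp
    also have "\<dots> = t" using h_flag[OF t] VK.linear_scale[OF h(1)] h(2) assms by simp
    finally have "t = 0" using hx by simp
    then show False using t x(2) by (simp add: V.scale_zero_left)
  qed
  with h(1) h_flag show ?thesis using that by blast
qed

lemma independent_basis_subset: "X \<subseteq> e ` {..c} \<Longrightarrow> V.independent X"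
  using V.independent_mono[OF basis_independent] by blast

lemma card_basis_image: "X \<subseteq> {..c} \<Longrightarrow> card (e ` X) = card X"
  using basis_inj by (simp add: card_image inj_on_subset)

lemma span_swap_inter_flag:
  assumes "Suc k \<le> c" "y \<in> V.span (insert (e (Suc k)) (e ` {..<k}))" "y \<in> flag e (Suc k)"
  shows "y \<in> flag e k"
proof -
  obtain t where t: "y - scale_fun t (e (Suc k)) \<in> flag e k"
    using assms(2) unfolding V.span_breakdown_eq flag_def by blast
  then have "y - scale_fun t (e (Suc k)) \<in> flag e (Suc k)"
    using flag_mono[of k "Suc k"] by auto
  then have "y - (y - scale_fun t (e (Suc k))) \<in> flag e (Suc k)"
    using assms(3) unfolding flag_def by (rule V.span_diff[rotated])
  then have in_flag: "scale_fun t (e (Suc k)) \<in> flag e (Suc k)" by simp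
  have "t = 0"
  proof (rule ccontr)
    assume "t \<noteq> 0"
    then have "scale_fun (inverse t) (scale_fun t (e (Suc k))) = e (Suc k)" by simp
    moreover have "scale_fun (inverse t) (scale_fun t (e (Suc k))) \<in> flag e (Suc k)"
      using in_flag unfolding flag_def by (rule V.span_scale)
    ultimately show False using basis_notin_flag[OF assms(1)] by simp
  qed
  then show ?thesis using t by (simp add: V.scale_zero_left)
qed

lemma quadric_separated_Un_layer:
  assumes "K \<le> c" and S: "quadric_separated c S" "S \<subseteq> flag e K"
    and T: "T \<subseteq> flag e (Suc K) - flag e K" "V.independent T"
  shows "quadric_separated c (S \<union> T)"
  unfolding quadric_separated_def
proof
  obtain h where h: "Vector_Spaces.linear scale_fun (*) h" "\<And>x. x \<in> flag e K \<Longrightarrow> h x = 0"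
    "\<And>x. x \<in> flag e (Suc K) \<Longrightarrow> x \<notin> flag e K \<Longrightarrow> h x \<noteq> 0"
    using obtain_linear_vanishing_on_flag[OF \<open>K \<le> c\<close>] by blast
  have hS: "h q = 0" if "q \<in> S" for q using h(2) S(2) that by blast
  have hT: "h q \<noteq> 0" if "q \<in> T" for q using h(3) T(1) that by blast
  fix p assume p: "p \<in> S \<union> T"
  show "\<exists>Q. quadratic_on c Q \<and> (\<forall>q\<in>S \<union> T - {p}. Q q = 0) \<and> Q p \<noteq> 0"
  proof (cases "p \<in> T")
    case True
    obtain L where L: "Vector_Spaces.linear scale_fun (*) L" "\<forall>x\<in>T. L x = (if x = p then 1 else 0)"
      using VK.linear_independent_extend[OF T(2), of "\<lambda>x. if x = p then 1 else 0"] by blast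
    have "quadratic_on c (\<lambda>v. h v * L v)" by (rule quadratic_on_mult_linear[OF h(1) L(1)])
    moreover have "\<forall>q\<in>S \<union> T - {p}. h q * L q = 0" using hS L(2) by auto
    moreover have "h p * L p \<noteq> 0" using hT[OF True] L(2) True by simp
    ultimately show ?thesis by blast
  next
    case False
    then have "p \<in> S" using p by blast
    then obtain Q where Q: "quadratic_on c Q" "\<forall>q\<in>S - {p}. Q q = 0" "Q p \<noteq> 0"
      using S(1) unfolding quadric_separated_def by blast
    \<comment> \<open>correct Q on the new layer by a multiple of h, which vanishes on S\<close>
    obtain L where L: "Vector_Spaces.linear scale_fun (*) L" "\<forall>x\<in>T. L x = - Q x / h x"
      using VK.linear_independent_extend[OF T(2), of "\<lambda>x. - Q x / h x"] by blast
    have "quadratic_on c (\<lambda>v. Q v + h v * L v)"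
      by (rule quadratic_on_add[OF Q(1) quadratic_on_mult_linear[OF h(1) L(1)]])
    moreover have "\<forall>q\<in>S \<union> T - {p}. Q q + h q * L q = 0"
      using Q(2) hS hT L(2) by auto
    moreover have "Q p + h p * L p \<noteq> 0" using Q(3) hS[OF \<open>p \<in> S\<close>] by simp
    ultimately show ?thesis by blast
  qed
qed

lemma quadric_separated_UN_layers:
  assumes "\<And>k. k \<le> c \<Longrightarrow> S k \<subseteq> flag e (Suc k) - flag e k"
    and "\<And>k. k \<le> c \<Longrightarrow> V.independent (S k)"
    and "K \<le> Suc c"
  shows "quadric_separated c (\<Union>k<K. S k)"
  using \<open>K \<le> Suc c\<close>
proof (induction K)
  case 0
  then show ?case by (simp add: quadric_separated_def)
next
  case (Suc K)
  have "(\<Union>k<K. S k) \<subseteq> flag e K"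
  proof (intro UN_least)
    fix k assume "k \<in> {..<K}"
    then show "S k \<subseteq> flag e K" using assms(1)[of k] flag_mono[of "Suc k" K] Suc.prems by auto
  qed
  then have "quadric_separated c ((\<Union>k<K. S k) \<union> S K)"
    using Suc assms by (intro quadric_separated_Un_layer) auto
  then show ?case by (simp add: lessThan_Suc Un_commute)
qed

end

lemma sum_min_Suc_ge:
  fixes \<delta> :: "nat \<Rightarrow> nat"
  assumes "1 \<le> m" "m \<le> c" "\<forall>j<m. \<delta> j = 1" "\<forall>k. m \<le> k \<longrightarrow> k \<le> c \<longrightarrow> 2 \<le> \<delta> k"
    "2*c+1 \<le> (\<Sum>k\<le>c. \<delta> k)"
  shows "2*c+1 \<le> (\<Sum>k\<le>c. min (\<delta> k) (Suc m))"
proof (cases "\<forall>k\<le>c. \<delta> k \<le> Suc m")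
  case True
  then have "(\<Sum>k\<le>c. min (\<delta> k) (Suc m)) = (\<Sum>k\<le>c. \<delta> k)" by (intro sum.cong) auto
  then show ?thesis using assms by simp
next
  case False
  then obtain k0 where k0: "k0 \<le> c" "Suc m < \<delta> k0" by auto
  then have "m \<le> k0" using assms(3) by (cases "k0 < m") auto
  \<comment> \<open>lower bound: 1 below m, 2 from m on, and m + 1 at k0\<close>
  let ?g = "\<lambda>k. (if k < m then 1 else 2) + (if k = k0 then m - 1 else (0::nat))"
  have "(\<Sum>k\<le>c. ?g k) = (\<Sum>k<Suc c. if k < m then 1 else 2) + (m - 1)"
    using k0 by (simp add: sum.distrib lessThan_Suc_atMost)
  also have "(\<Sum>k<Suc c. if k < m then 1 else 2::nat) = 2 * Suc c - m"
    using assms(2) by (induction c) (auto simp: le_Suc_eq)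
  finally have "(\<Sum>k\<le>c. ?g k) = 2*c+1" using assms(1,2) by simp
  moreover have "(\<Sum>k\<le>c. ?g k) \<le> (\<Sum>k\<le>c. min (\<delta> k) (Suc m))"
    using assms(1,3,4) k0 \<open>m \<le> k0\<close> by (intro sum_mono) auto
  ultimately show ?thesis by simp
qed

locale semi_uniform_vectors =
  fixes G :: "(nat \<Rightarrow> 'k::field) set" and c :: nat and \<nu> :: "nat \<Rightarrow> nat"
  assumes finite_G: "finite G" and G_subset_vecs: "G \<subseteq> vecs c" and zero_notin_G: "0 \<notin> G"
    and vecs_subset_span_G: "vecs c \<subseteq> V.span G"
    and not_parallel: "\<And>x y. x \<in> G \<Longrightarrow> y \<in> G \<Longrightarrow> x \<in> V.span {y} \<Longrightarrow> x = y"
    and uniform: "\<And>i X. i \<le> c \<Longrightarrow> X \<subseteq> G \<Longrightarrow> card X = Suc i \<Longrightarrow> V.independent X \<Longrightarrow>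
                   card {x\<in>G. x \<in> V.span X} = \<nu> i"
begin

lemma obtain_basis:
  obtains e where "e ` {..c} \<subseteq> G" "V.independent (e ` {..c})" "inj_on e {..c}"
    "vecs c \<subseteq> V.span (e ` {..c})"
proof -
  obtain B where B: "B \<subseteq> G" "V.independent B" "G \<subseteq> V.span B"
    using V.maximal_independent_subset[of G] by blast
  have "finite B" "card B \<le> Suc c"
    using independent_in_vecs_card_le B(1,2) G_subset_vecs by blast+
  moreover have "vecs c \<subseteq> V.span B"
    using vecs_subset_span_G V.span_minimal[OF B(3) V.subspace_span] by blast
  ultimately have "card B = Suc c" using card_ge_if_spans_vecs le_antisym by blast
  then obtain e where "bij_betw e {..c} B"
    using ex_bij_betw_nat_finite[OF \<open>finite B\<close>] by (auto simp: atLeast0LessThan lessThan_Suc_atMost)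
  then show ?thesis
    using that B \<open>vecs c \<subseteq> V.span B\<close> by (auto simp: bij_betw_def)
qed

end

locale flagged = semi_uniform_vectors G c \<nu> + flag_basis c e
  for G :: "(nat \<Rightarrow> 'k::field) set" and c \<nu> e +
  assumes basis_subset_G: "e ` {..c} \<subseteq> G" and vecs_subset_span_basis: "vecs c \<subseteq> V.span (e ` {..c})"
    and card_G: "2*c+1 \<le> card G" and c_pos: "1 \<le> c"
begin

definition layer :: "nat \<Rightarrow> (nat \<Rightarrow> 'k) set" where
  "layer k = {x\<in>G. x \<in> flag e (Suc k) - flag e k}"

definition layer_size :: "nat \<Rightarrow> nat" where
  "layer_size k = card (layer k)"

definition flag_count :: "nat \<Rightarrow> nat" where
  "flag_count k = card {x\<in>G. x \<in> flag e k}"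

lemma finite_layer: "finite (layer k)"
  unfolding layer_def using finite_G by auto

lemma layers_disjoint: "j < k \<Longrightarrow> layer j \<inter> layer k = {}"
  unfolding layer_def using flag_mono[of "Suc j" k] by auto

lemma basis_in_layer: "k \<le> c \<Longrightarrow> e k \<in> layer k"
  unfolding layer_def using basis_in_flag_Suc[of e k] basis_notin_flag basis_subset_G by auto

lemma layer_size_pos: "k \<le> c \<Longrightarrow> 1 \<le> layer_size k"
  unfolding layer_size_def using basis_in_layer finite_layer
  by (metis One_nat_def Suc_leI card_gt_0_iff empty_iff)

lemma flag_count_Suc: "flag_count (Suc k) = flag_count k + layer_size k"
proof -
  have sub: "{x\<in>G. x \<in> flag e k} \<subseteq> {x\<in>G. x \<in> flag e (Suc k)}"
    using flag_mono[of k "Suc k"] by auto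
  have "layer k = {x\<in>G. x \<in> flag e (Suc k)} - {x\<in>G. x \<in> flag e k}"
    unfolding layer_def by auto
  then have "layer_size k = flag_count (Suc k) - flag_count k"
    unfolding layer_size_def flag_count_def using finite_G sub by (simp add: card_Diff_subset)
  moreover have "flag_count k \<le> flag_count (Suc k)"
    unfolding flag_count_def using finite_G sub by (intro card_mono) auto
  ultimately show ?thesis by simp
qed

lemma flag_count_eq_sum: "flag_count (Suc k) = (\<Sum>j\<le>k. layer_size j)"
proof (induction k)
  case 0
  have "flag_count 0 = 0" unfolding flag_count_def using zero_notin_G by auto
  then show ?case using flag_count_Suc[of 0] by simp
next
  case (Suc k)
  then show ?case using flag_count_Suc[of "Suc k"] by simp
qed

lemma flag_count_eq_nu: "k \<le> c \<Longrightarrow> flag_count (Suc k) = \<nu> k"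
  unfolding flag_count_def flag_def
  using uniform[of k "e ` {..<Suc k}"] card_basis_image[of "{..<Suc k}"]
    independent_basis_subset[of "e ` {..<Suc k}"] basis_subset_G
  by fastforce

lemma sum_layer_size: "(\<Sum>k\<le>c. layer_size k) = card G"
proof -
  have "G \<subseteq> flag e (Suc c)"
    using G_subset_vecs vecs_subset_span_basis by (auto simp: flag_def lessThan_Suc_atMost)
  then have "{x\<in>G. x \<in> flag e (Suc c)} = G" by auto
  then show ?thesis using flag_count_eq_sum[of c] unfolding flag_count_def by simp
qed

lemma layer_size_0: "layer_size 0 = 1"
proof -
  have "layer 0 = {e 0}"
  proof
    show "{e 0} \<subseteq> layer 0" using basis_in_layer[of 0] by simp
    show "layer 0 \<subseteq> {e 0}"
      using not_parallel basis_subset_G by (auto simp: layer_def flag_def lessThan_Suc)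
  qed
  then show ?thesis unfolding layer_size_def by simp
qed

lemma layer_size_mono:
  assumes "Suc k \<le> c"
  shows "layer_size k \<le> layer_size (Suc k)"
proof -
  let ?X = "insert (e (Suc k)) (e ` {..<k})"
  let ?A = "{y\<in>G. y \<in> V.span ?X}"
  let ?B = "{y\<in>G. y \<in> flag e k}"
  have "e (Suc k) \<notin> e ` {..<k}"
    using assms inj_onD[OF basis_inj] by fastforce
  then have "card ?X = Suc k" using card_basis_image[of "{..<k}"] assms by (simp add: subset_iff)
  moreover have "?X \<subseteq> e ` {..c}" using assms by auto
  moreover from this have "?X \<subseteq> G" using basis_subset_G by (rule subset_trans)
  ultimately have "card ?A = flag_count (Suc k)"
    using uniform[of k ?X] independent_basis_subset flag_count_eq_nu[of k] assms by simp
  moreover have "?B \<subseteq> ?A" unfolding flag_def by (auto intro: V.span_mono[THEN subsetD, rotated])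
  ultimately have "card (?A - ?B) = layer_size k"
    using finite_G flag_count_Suc[of k] unfolding flag_count_def by (simp add: card_Diff_subset)
  moreover have "?A - ?B \<subseteq> layer (Suc k)"
  proof
    fix y assume y: "y \<in> ?A - ?B"
    have "V.span ?X \<subseteq> flag e (Suc (Suc k))" unfolding flag_def by (intro V.span_mono) auto
    then show "y \<in> layer (Suc k)"
      using y span_swap_inter_flag[OF assms, of y] unfolding layer_def by auto
  qed
  then have "card (?A - ?B) \<le> layer_size (Suc k)"
    unfolding layer_size_def by (rule card_mono[OF finite_layer])
  ultimately show ?thesis by simp
qed

definition first_thick_layer :: nat where
  "first_thick_layer = (LEAST k. 2 \<le> layer_size k)"

lemma exists_thick_layer: "\<exists>k\<le>c. 2 \<le> layer_size k"
proof (rule ccontr)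
  assume "\<not> ?thesis"
  then have "(\<Sum>k\<le>c. layer_size k) \<le> (\<Sum>k\<le>c. 1)" by (intro sum_mono) auto
  then show False using sum_layer_size card_G c_pos by simp
qed

lemma first_thick_layer:
  shows "first_thick_layer \<le> c" "2 \<le> layer_size first_thick_layer"
    and "\<And>j. j < first_thick_layer \<Longrightarrow> layer_size j = 1"
    and "1 \<le> first_thick_layer"
proof -
  obtain k where k: "k \<le> c" "2 \<le> layer_size k" using exists_thick_layer by blast
  show "first_thick_layer \<le> c"
    unfolding first_thick_layer_def using Least_le[of "\<lambda>k. 2 \<le> layer_size k" k] k by simp
  show "2 \<le> layer_size first_thick_layer"
    unfolding first_thick_layer_def using LeastI[of "\<lambda>k. 2 \<le> layer_size k" k] k by simp
  show "layer_size j = 1" if "j < first_thick_layer" for j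
    using not_less_Least[of j "\<lambda>k. 2 \<le> layer_size k"] that layer_size_pos[of j]
      \<open>first_thick_layer \<le> c\<close>
    unfolding first_thick_layer_def by simp
  then show "1 \<le> first_thick_layer"
    using \<open>2 \<le> layer_size first_thick_layer\<close> layer_size_0 by (cases first_thick_layer) auto
qed

lemma layer_size_ge_2: "first_thick_layer \<le> k \<Longrightarrow> k \<le> c \<Longrightarrow> 2 \<le> layer_size k"
proof (induction k)
  case 0
  then show ?case using first_thick_layer(2) by simp
next
  case (Suc k)
  then show ?case
    using first_thick_layer(2) layer_size_mono[of k] by (cases "first_thick_layer = Suc k") auto
qed

lemma nu_below_first_thick_layer:
  assumes "j < first_thick_layer"
  shows "\<nu> j = Suc j"
proof -
  have "\<nu> j = (\<Sum>i\<le>j. layer_size i)"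
    using assms first_thick_layer(1) flag_count_eq_nu[of j] flag_count_eq_sum[of j] by simp
  also have "\<dots> = (\<Sum>i\<le>j. 1)" using first_thick_layer(3) assms by (intro sum.cong) auto
  finally show ?thesis by simp
qed

text \<open>A maximal independent subset Y of a dependent X would be proper, yet its span
  contains only \<nu> (card Y - 1) = card Y points of G.\<close>
lemma independent_if_card_le:
  assumes "X \<subseteq> G" "card X \<le> Suc first_thick_layer"
  shows "V.independent X"
proof (rule ccontr)
  assume dep: "\<not> V.independent X"
  have "finite X" using assms(1) finite_G finite_subset by blast
  obtain Y where Y: "Y \<subseteq> X" "V.independent Y" "X \<subseteq> V.span Y"
    using V.maximal_independent_subset[of X] by blast
  have "card Y < card X"
    using Y dep \<open>finite X\<close> by (metis psubset_card_mono psubset_eq)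
  have "Y \<noteq> {}"
  proof
    assume "Y = {}"
    then have "X = {}" using Y(3) assms(1) zero_notin_G by auto
    then show False using dep by (simp add: V.dependent_def)
  qed
  then obtain j where j: "card Y = Suc j"
    using \<open>finite X\<close> Y(1) finite_subset by (metis card_0_eq not0_implies_Suc)
  then have "j < first_thick_layer" using \<open>card Y < card X\<close> assms(2) by simp
  then have "card {x\<in>G. x \<in> V.span Y} = card Y"
    using uniform[of j Y] j Y(1,2) assms(1) first_thick_layer(1) nu_below_first_thick_layer by auto
  moreover have "card X \<le> card {x\<in>G. x \<in> V.span Y}"
    using Y(3) assms(1) finite_G by (intro card_mono) auto
  ultimately show False using \<open>card Y < card X\<close> by simp
qed

definition sample :: "nat \<Rightarrow> (nat \<Rightarrow> 'k) set" where
  "sample k = (SOME T. T \<subseteq> layer k \<and> e k \<in> T \<and> card T = min (layer_size k) (Suc first_thick_layer))"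

lemma sample:
  assumes "k \<le> c"
  shows "sample k \<subseteq> layer k" "e k \<in> sample k"
    and "card (sample k) = min (layer_size k) (Suc first_thick_layer)"
proof -
  let ?n = "min (layer_size k) (Suc first_thick_layer)"
  have ek: "e k \<in> layer k" using basis_in_layer[OF assms] .
  have "?n - 1 \<le> card (layer k - {e k})"
    using ek finite_layer unfolding layer_size_def by simp
  then obtain T where T: "T \<subseteq> layer k - {e k}" "card T = ?n - 1" "finite T"
    by (rule obtain_subset_with_card_n)
  moreover have "e k \<notin> T" using T(1) by blast
  ultimately have "card (insert (e k) T) = ?n" using layer_size_pos[OF assms] by simp
  then have "\<exists>T. T \<subseteq> layer k \<and> e k \<in> T \<and> card T = ?n"
    using T(1) ek by (intro exI[of _ "insert (e k) T"]) auto
  then have "sample k \<subseteq> layer k \<and> e k \<in> sample k \<and> card (sample k) = ?n"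
    unfolding sample_def by (rule someI_ex)
  then show "sample k \<subseteq> layer k" "e k \<in> sample k" "card (sample k) = ?n" by auto
qed

lemma card_UN_samples: "2*c+1 \<le> card (\<Union>k\<le>c. sample k)"
proof -
  have "finite (sample k)" if "k \<le> c" for k
    using sample(1)[OF that] finite_layer finite_subset by blast
  moreover have "sample i \<inter> sample j = {}" if "i \<le> c" "j \<le> c" "i \<noteq> j" for i j
    using layers_disjoint[of i j] layers_disjoint[of j i] sample(1)[OF that(1)] sample(1)[OF that(2)]
      that(3)
    by (cases "i < j") auto
  ultimately have "card (\<Union>k\<le>c. sample k) = (\<Sum>k\<le>c. card (sample k))"
    by (intro card_UN_disjoint) auto
  also have "\<dots> = (\<Sum>k\<le>c. min (layer_size k) (Suc first_thick_layer))"
    using sample(3) by simp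
  finally show ?thesis
    using sum_min_Suc_ge[of first_thick_layer c layer_size] first_thick_layer layer_size_ge_2
      sum_layer_size card_G
    by simp
qed

lemma quadric_separated_UN_samples: "quadric_separated c (\<Union>k\<le>c. sample k)"
proof -
  have "sample k \<subseteq> flag e (Suc k) - flag e k" "V.independent (sample k)" if "k \<le> c" for k
    using sample[OF that] independent_if_card_le[of "sample k"] unfolding layer_def by auto
  then show ?thesis
    using quadric_separated_UN_layers[of sample "Suc c"] by (simp add: lessThan_Suc_atMost)
qed

lemma exists_separated_spanning_subset:
  "\<exists>S\<subseteq>G. card S = 2*c+1 \<and> vecs c \<subseteq> V.span S \<and> quadric_separated c S"
proof -
  let ?U = "\<Union>k\<le>c. sample k"
  have basis_U: "e ` {..c} \<subseteq> ?U" using sample(2) by auto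
  have "?U \<subseteq> G" using sample(1) unfolding layer_def by blast
  have card_basis: "card (e ` {..c}) = Suc c" using card_basis_image[of "{..c}"] by simp
  have "finite ?U" using finite_G \<open>?U \<subseteq> G\<close> finite_subset by blast
  then have "c \<le> card (?U - e ` {..c})"
    using card_UN_samples card_basis basis_U by (simp add: card_Diff_subset)
  then obtain T where T: "T \<subseteq> ?U - e ` {..c}" "card T = c" "finite T"
    by (rule obtain_subset_with_card_n)
  let ?S = "e ` {..c} \<union> T"
  have "e ` {..c} \<inter> T = {}" using T(1) by blast
  then have "card ?S = 2*c+1" using T card_basis card_Un_disjoint[of "e ` {..c}" T] by simp
  moreover have "vecs c \<subseteq> V.span ?S"
    using vecs_subset_span_basis V.span_mono[of "e ` {..c}" ?S] by blast
  moreover have "quadric_separated c ?S"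
    using T(1) basis_U by (intro quadric_separated_subset[OF quadric_separated_UN_samples]) auto
  moreover have "?S \<subseteq> G" using T(1) basis_U \<open>?U \<subseteq> G\<close> by blast
  ultimately show ?thesis by blast
qed

end

lemma (in semi_uniform_vectors) exists_separated_spanning_subset:
  assumes "1 \<le> c" "2*c+1 \<le> card G"
  shows "\<exists>S\<subseteq>G. card S = 2*c+1 \<and> vecs c \<subseteq> V.span S \<and> quadric_separated c S"
proof -
  obtain e where "e ` {..c} \<subseteq> G" "V.independent (e ` {..c})" "inj_on e {..c}"
    "vecs c \<subseteq> V.span (e ` {..c})"
    by (rule obtain_basis)
  then have "flagged G c \<nu> e"
    using assms by unfold_locales
  then show ?thesis by (rule flagged.exists_separated_spanning_subset)
qed

definition proj_rep :: "(nat \<Rightarrow> 'k::field) set \<Rightarrow> nat \<Rightarrow> 'k" where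
  "proj_rep p = (SOME v. v \<noteq> 0 \<and> p = proj_pt v)"

lemma mem_proj_pt_iff: "w \<in> proj_pt v \<longleftrightarrow> (\<exists>a. w = scale_fun a v)"
  unfolding proj_pt_def scale_fun_def by simp

lemma proj_pt_scale:
  assumes "a \<noteq> 0"
  shows "proj_pt (scale_fun a v) = proj_pt v"
proof (rule set_eqI)
  fix w
  have "scale_fun b (scale_fun a v) = scale_fun (b * a) v" for b by (simp add: mult.assoc)
  moreover have "scale_fun b v = scale_fun (b / a) (scale_fun a v)" for b using assms by simp
  ultimately show "w \<in> proj_pt (scale_fun a v) \<longleftrightarrow> w \<in> proj_pt v"
    unfolding mem_proj_pt_iff by metis
qed

lemma proj_rep:
  assumes "p \<in> proj_space c"
  shows "proj_rep p \<noteq> 0" "p = proj_pt (proj_rep p)" "proj_rep p \<in> p" "proj_rep p \<in> vecs c"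
proof -
  obtain v where v: "v \<in> vecs c" "v \<noteq> 0" "p = proj_pt v"
    using assms unfolding proj_space_def by (auto simp: func_zero)
  then have "\<exists>v. v \<noteq> 0 \<and> p = proj_pt v" by blast
  then have rep: "proj_rep p \<noteq> 0 \<and> p = proj_pt (proj_rep p)"
    unfolding proj_rep_def by (rule someI_ex)
  then show "proj_rep p \<noteq> 0" "p = proj_pt (proj_rep p)" by auto
  have "proj_rep p \<in> proj_pt (proj_rep p)"
    unfolding mem_proj_pt_iff by (rule exI[of _ 1]) simp
  then show "proj_rep p \<in> p" using rep by simp
  then obtain a where "proj_rep p = scale_fun a v" using v(3) mem_proj_pt_iff by blast
  then show "proj_rep p \<in> vecs c" using v(1) by (simp add: vecs_def)
qed

lemma mem_proj_space_iff:
  assumes "p \<in> proj_space c"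
  shows "w \<in> p \<longleftrightarrow> (\<exists>a. w = scale_fun a (proj_rep p))"
proof -
  have "w \<in> p \<longleftrightarrow> w \<in> proj_pt (proj_rep p)"
    using proj_rep(2)[OF assms] by (rule arg_cong)
  then show ?thesis by (simp only: mem_proj_pt_iff)
qed

lemma scale_proj_rep_mem: "p \<in> proj_space c \<Longrightarrow> scale_fun a (proj_rep p) \<in> p"
  using mem_proj_space_iff by blast

lemma inj_on_proj_rep: "inj_on proj_rep (proj_space c)"
  by (rule inj_onI) (metis proj_rep(2))

lemma proj_pt_subset_iff:
  assumes "p \<in> proj_space c" "V.subspace A"
  shows "p \<subseteq> A \<longleftrightarrow> proj_rep p \<in> A"
proof
  assume "proj_rep p \<in> A"
  then show "p \<subseteq> A"
    using mem_proj_space_iff[OF assms(1)] V.subspace_scale[OF assms(2)] by auto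
qed (use proj_rep(3)[OF assms(1)] in blast)

lemma lspan_eq_span_proj_rep:
  assumes "finite S" "S \<subseteq> proj_space c"
  shows "lspan S = V.span (proj_rep ` S)"
proof
  show "lspan S \<subseteq> V.span (proj_rep ` S)"
  proof
    fix x assume "x \<in> lspan S"
    then have "\<exists>f. x = (\<lambda>i. \<Sum>p\<in>S. f p i) \<and> (\<forall>p\<in>S. f p \<in> p)"
      unfolding lspan_def by simp
    then obtain f where f: "x = (\<lambda>i. \<Sum>p\<in>S. f p i)" "\<forall>p\<in>S. f p \<in> p"
      by blast
    have "x = (\<Sum>p\<in>S. f p)" using f(1) by (simp add: fun_eq_iff sum_fun_apply)
    also have "\<dots> \<in> V.span (proj_rep ` S)"
    proof (rule V.span_sum)
      fix p assume p: "p \<in> S"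
      then obtain a where "f p = scale_fun a (proj_rep p)"
        using mem_proj_space_iff[of p c "f p"] f(2) assms(2) by auto
      then show "f p \<in> V.span (proj_rep ` S)" using p by (simp add: V.span_base V.span_scale)
    qed
    finally show "x \<in> V.span (proj_rep ` S)" .
  qed
  show "V.span (proj_rep ` S) \<subseteq> lspan S"
  proof
    fix x assume "x \<in> V.span (proj_rep ` S)"
    then obtain u where "x = (\<Sum>v\<in>proj_rep ` S. scale_fun (u v) v)"
      using V.span_finite[of "proj_rep ` S"] assms(1) by auto
    also have "\<dots> = (\<Sum>p\<in>S. scale_fun (u (proj_rep p)) (proj_rep p))"
      using sum.reindex[OF inj_on_subset[OF inj_on_proj_rep assms(2)]] by simp
    finally have "x = (\<lambda>i. \<Sum>p\<in>S. scale_fun (u (proj_rep p)) (proj_rep p) i)"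
      by (simp add: fun_eq_iff sum_fun_apply)
    moreover have "\<forall>p\<in>S. scale_fun (u (proj_rep p)) (proj_rep p) \<in> p"
      using scale_proj_rep_mem assms(2) by blast
    ultimately have "\<exists>f. x = (\<lambda>i. \<Sum>p\<in>S. f p i) \<and> (\<forall>p\<in>S. f p \<in> p)"
      by (intro exI[of _ "\<lambda>p. scale_fun (u (proj_rep p)) (proj_rep p)"] conjI)
    then show "x \<in> lspan S" unfolding lspan_def by simp
  qed
qed

lemma lin_indep_pts_if_independent:
  assumes "finite S" "S \<subseteq> proj_space c" "V.independent (proj_rep ` S)"
  shows "lin_indep_pts S"
  unfolding lin_indep_pts_def
proof (intro conjI allI impI ballI)
  fix f p assume f: "(\<forall>p\<in>S. f p \<in> p) \<and> (\<lambda>i. \<Sum>p\<in>S. f p i) = (\<lambda>_. 0)" and "p \<in> S"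
  have "\<forall>q\<in>S. \<exists>a. f q = scale_fun a (proj_rep q)"
    using f mem_proj_space_iff assms(2) by (meson subsetD)
  then obtain a where a: "\<forall>q\<in>S. f q = scale_fun (a q) (proj_rep q)"
    by (auto dest!: bchoice)
  have inj: "inj_on proj_rep S" using inj_on_subset[OF inj_on_proj_rep assms(2)] .
  define u where "u v = a (the_inv_into S proj_rep v)" for v
  have "(\<Sum>v\<in>proj_rep ` S. scale_fun (u v) v) = (\<Sum>q\<in>S. f q)"
    using a by (simp add: sum.reindex[OF inj] u_def the_inv_into_f_f[OF inj])
  also have "\<dots> = 0" using f by (simp add: fun_eq_iff sum_fun_apply)
  finally have "(\<Sum>v\<in>proj_rep ` S. scale_fun (u v) v) = 0" .
  then have "u (proj_rep p) = 0"
    using V.independentD[OF assms(3) _ subset_refl] assms(1) \<open>p \<in> S\<close> by blast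
  then show "f p = (\<lambda>_. 0)"
    using a \<open>p \<in> S\<close> by (simp add: u_def the_inv_into_f_f[OF inj] fun_eq_iff)
qed (fact assms(1))

lemma quad_form_scale: "quad_form c a (scale_fun t v) = t^2 * quad_form c a v"
proof -
  have e: "a j k * scale_fun t v j * scale_fun t v k = t^2 * (a j k * v j * v k)" for j k
    unfolding scale_fun_apply power2_eq_square by algebra
  show ?thesis unfolding quad_form_def e sum_distrib_left ..
qed

lemma semi_uniform_vectors_proj_rep:
  assumes \<Gamma>: "\<Gamma> \<subseteq> proj_space c" "finite \<Gamma>" "spans_proj c \<Gamma>"
    and unif: "\<forall>i\<le>c. \<forall>T\<subseteq>\<Gamma>. card T = i + 1 \<and> lin_indep_pts T \<longrightarrow>
                 card {p\<in>\<Gamma>. p \<subseteq> lspan T} = \<nu> i"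
  shows "semi_uniform_vectors (proj_rep ` \<Gamma>) c \<nu>"
proof
  have inj: "inj_on proj_rep \<Gamma>" using inj_on_subset[OF inj_on_proj_rep \<Gamma>(1)] .
  have in_proj: "p \<in> proj_space c" if "p \<in> \<Gamma>" for p using \<Gamma>(1) that by (rule subsetD)
  show "finite (proj_rep ` \<Gamma>)" using \<Gamma>(2) by simp
  show "proj_rep ` \<Gamma> \<subseteq> vecs c" by (rule image_subsetI) (rule proj_rep(4)[OF in_proj])
  show "0 \<notin> proj_rep ` \<Gamma>" using proj_rep(1)[OF in_proj] by force
  show "vecs c \<subseteq> V.span (proj_rep ` \<Gamma>)"
    using \<Gamma>(3) lspan_eq_span_proj_rep[OF \<Gamma>(2,1)] unfolding spans_proj_def by simp
  show "x = y" if xy: "x \<in> proj_rep ` \<Gamma>" "y \<in> proj_rep ` \<Gamma>" "x \<in> V.span {y}" for x y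
  proof -
    obtain p q where pq: "p \<in> \<Gamma>" "q \<in> \<Gamma>" "x = proj_rep p" "y = proj_rep q"
      using xy(1,2) by blast
    obtain a where a: "x = scale_fun a y" using xy(3) unfolding V.span_singleton by blast
    then have "a \<noteq> 0" using proj_rep(1)[OF in_proj[OF pq(1)]] pq(3) by auto
    then have "proj_pt x = proj_pt y" using a proj_pt_scale by simp
    moreover have "p = proj_pt x" "q = proj_pt y"
      using proj_rep(2)[OF in_proj[OF pq(1)]] proj_rep(2)[OF in_proj[OF pq(2)]] pq(3,4) by simp_all
    ultimately have "p = q" by simp
    then show "x = y" using pq by simp
  qed
  show "card {x \<in> proj_rep ` \<Gamma>. x \<in> V.span X} = \<nu> i"
    if X: "i \<le> c" "X \<subseteq> proj_rep ` \<Gamma>" "card X = Suc i" "V.independent X" for i X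
  proof -
    obtain T where T: "T \<subseteq> \<Gamma>" "X = proj_rep ` T" using X(2) by (auto simp: subset_image_iff)
    have "finite T" "T \<subseteq> proj_space c" using T(1) \<Gamma>(1,2) finite_subset by auto
    then have "lin_indep_pts T" "lspan T = V.span X"
      using lin_indep_pts_if_independent lspan_eq_span_proj_rep X(4) T(2) by simp_all
    moreover have "card T = i + 1" using X(3) T card_image[OF inj_on_subset[OF inj T(1)]] by simp
    ultimately have "card {p\<in>\<Gamma>. p \<subseteq> V.span X} = \<nu> i"
      using unif[rule_format, OF X(1) T(1)] by simp
    moreover have "{p\<in>\<Gamma>. p \<subseteq> V.span X} = {p\<in>\<Gamma>. proj_rep p \<in> V.span X}"
      using proj_pt_subset_iff[OF in_proj V.subspace_span] by blast
    moreover have "{x \<in> proj_rep ` \<Gamma>. x \<in> V.span X} = proj_rep ` {p\<in>\<Gamma>. proj_rep p \<in> V.span X}"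
      by blast
    ultimately show ?thesis using card_image[OF inj_on_subset[OF inj]] by simp
  qed
qed

lemma three_regular_if_quadric_separated:
  assumes "\<Gamma> \<subseteq> proj_space c" "quadric_separated c (proj_rep ` \<Gamma>)"
  shows "three_regular c \<Gamma>"
  unfolding three_regular_def
proof
  have inj: "inj_on proj_rep \<Gamma>" using inj_on_subset[OF inj_on_proj_rep assms(1)] .
  have in_proj: "p \<in> proj_space c" if "p \<in> \<Gamma>" for p using assms(1) that by (rule subsetD)
  fix p assume "p \<in> \<Gamma>"
  then obtain Q where Q: "quadratic_on c Q" "\<forall>q\<in>proj_rep ` \<Gamma> - {proj_rep p}. Q q = 0"
      "Q (proj_rep p) \<noteq> 0"
    using assms(2) unfolding quadric_separated_def by blast
  then obtain a where a: "\<forall>v\<in>vecs c. Q v = quad_form c a v" unfolding quadratic_on_def by blast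
  have contains_iff: "quadric_contains c a q \<longleftrightarrow> Q (proj_rep q) = 0" if "q \<in> \<Gamma>" for q
  proof -
    have "Q (proj_rep q) = quad_form c a (proj_rep q)"
      using a proj_rep(4)[OF in_proj[OF that]] by simp
    then show ?thesis
      unfolding quadric_contains_def
      using mem_proj_space_iff[OF in_proj[OF that]] proj_rep(3)[OF in_proj[OF that]]
      by (auto simp: quad_form_scale)
  qed
  have "\<forall>q\<in>\<Gamma> - {p}. quadric_contains c a q"
    using Q(2) \<open>p \<in> \<Gamma>\<close> contains_iff by (auto simp: inj_on_eq_iff[OF inj])
  moreover have "\<not> quadric_contains c a p" using Q(3) contains_iff[OF \<open>p \<in> \<Gamma>\<close>] by simp
  ultimately show "\<exists>a. (\<forall>q\<in>\<Gamma> - {p}. quadric_contains c a q) \<and> \<not> quadric_contains c a p"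
    by blast
qed

theorem proposition2p1:
  fixes \<Gamma> :: "(nat \<Rightarrow> 'k::alg_closed_field) set set"
    and c d :: nat
  assumes "c \<ge> 1"
    and "\<Gamma> \<subseteq> proj_space c"
    and "finite \<Gamma>"
    and "card \<Gamma> = d"
    and "d \<ge> 2 * c + 1"
    and "linear_semi_uniform c \<Gamma>"
  shows "\<exists>\<Gamma>'\<subseteq>\<Gamma>. card \<Gamma>' = 2 * c + 1 \<and> spans_proj c \<Gamma>' \<and> three_regular c \<Gamma>'"
proof -
  obtain \<nu> where "spans_proj c \<Gamma>"
    and "\<forall>i\<le>c. \<forall>T\<subseteq>\<Gamma>. card T = i + 1 \<and> lin_indep_pts T \<longrightarrow> card {p\<in>\<Gamma>. p \<subseteq> lspan T} = \<nu> i"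
    using assms(6) unfolding linear_semi_uniform_def by blast
  then interpret semi_uniform_vectors "proj_rep ` \<Gamma>" c \<nu>
    by (rule semi_uniform_vectors_proj_rep[OF assms(2,3)])
  have inj: "inj_on proj_rep \<Gamma>" using inj_on_subset[OF inj_on_proj_rep assms(2)] .
  then have "2 * c + 1 \<le> card (proj_rep ` \<Gamma>)" using assms(4,5) by (simp add: card_image)
  then obtain S where S: "S \<subseteq> proj_rep ` \<Gamma>" "card S = 2 * c + 1" "vecs c \<subseteq> V.span S"
      "quadric_separated c S"
    using exists_separated_spanning_subset[OF assms(1)] by blast
  then obtain \<Gamma>' where \<Gamma>': "\<Gamma>' \<subseteq> \<Gamma>" "S = proj_rep ` \<Gamma>'" by (auto simp: subset_image_iff)
  have "finite \<Gamma>'" "\<Gamma>' \<subseteq> proj_space c" using \<Gamma>'(1) assms(2,3) finite_subset by auto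
  have "V.span S \<subseteq> vecs c"
    using S(1) G_subset_vecs subspace_vecs by (intro V.span_minimal) auto
  then have "spans_proj c \<Gamma>'"
    unfolding spans_proj_def lspan_eq_span_proj_rep[OF \<open>finite \<Gamma>'\<close> \<open>\<Gamma>' \<subseteq> proj_space c\<close>]
    using S(3) \<Gamma>'(2) by auto
  moreover have "card \<Gamma>' = 2 * c + 1" using S(2) \<Gamma>' card_image[OF inj_on_subset[OF inj \<Gamma>'(1)]] by simp
  moreover have "three_regular c \<Gamma>'"
    using three_regular_if_quadric_separated[OF \<open>\<Gamma>' \<subseteq> proj_space c\<close>] S(4) \<Gamma>'(2) by simp
  ultimately show ?thesis using \<Gamma>'(1) by blast
qed

end
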